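(* Let $A,B\in\mathbb{Z}$ with $4A^3+27B^2\ne0$, let $M$ be a positive integer with $\max\{10\sqrt{|A|},5\sqrt[3]{|B|}\}\le M$, let $D$ be a squarefree positive integer and $E_D: y^2=x^3+D^2Ax+D^3B$. Let $P,Q\in E_D(\mathbb{Q})$ with $MD\le x(P)<x(Q)$ and $y(P)y(Q)>0$. Then \[0.19\,x(P)\le x(P+Q)\le 2\,x(P).\] *)

theory Defs
  imports Complex_Main "HOL-Computational_Algebra.Squarefree"
begin

datatype ec_point = Inf | Pt rat rat

definition on_curve :: "rat \<Rightarrow> rat \<Rightarrow> ec_point \<Rightarrow> bool" where
  "on_curve a b P = (case P of Inf \<Rightarrow> True | Pt x y \<Rightarrow> y^2 = x^3 + a*x + b)"

fun ec_add :: "rat \<Rightarrow> ec_point \<Rightarrow> ec_point \<Rightarrow> ec_point" where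
  "ec_add a Inf Q = Q"
| "ec_add a P Inf = P"
| "ec_add a (Pt x1 y1) (Pt x2 y2) =
     (if x1 = x2 then
        (if y1 = - y2 then Inf
         else (let l = (3 * x1^2 + a) / (2 * y1); x3 = l^2 - 2 * x1
               in Pt x3 (l * (x1 - x3) - y1)))
      else (let l = (y2 - y1) / (x2 - x1); x3 = l^2 - x1 - x2
            in Pt x3 (l * (x1 - x3) - y1)))"

end

theory Submission
  imports Defs
begin

(*
  The x-coordinate of P + Q is x3 = l^2 - x1 - x2, where l is the slope of the chord PQ.
  Rescaling (x, y) to (x / x1, y / x1^(3/2)) reduces to x1 = 1 with |a| <= 1/100 and
  |b| <= 1/125; this is where the bound on M enters. There
  l (y1 + y2) = x1^2 + x1 x2 + x2^2 + a, which yields l^2 <= 3 + x2, i.e. x3 <= 2, and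
  l >= 1.41. For the lower bound, the cubic minus the square of the chord equals
  (x - 1) (x - x2) (x - x3); at x = 0.19 the chord lies below -0.13, so this is negative
  there and x3 > 0.19.
*)

definition chord_slope :: "'a::field \<Rightarrow> 'a \<Rightarrow> 'a \<Rightarrow> 'a \<Rightarrow> 'a" where
  "chord_slope x1 y1 x2 y2 = (y2 - y1) / (x2 - x1)"

definition chord_x :: "'a::field \<Rightarrow> 'a \<Rightarrow> 'a \<Rightarrow> 'a \<Rightarrow> 'a" where
  "chord_x x1 y1 x2 y2 = (chord_slope x1 y1 x2 y2)^2 - x1 - x2"

lemma ec_add_chord:
  assumes "x1 \<noteq> x2"
  shows "ec_add a (Pt x1 y1) (Pt x2 y2)
    = Pt (chord_x x1 y1 x2 y2) (chord_slope x1 y1 x2 y2 * (x1 - chord_x x1 y1 x2 y2) - y1)"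
  using assms by (simp add: chord_x_def chord_slope_def Let_def)

lemma chord_slope_mult_sum:
  fixes x1 y1 x2 y2 a b :: "'a::field"
  assumes "y1^2 = x1^3 + a*x1 + b" "y2^2 = x2^3 + a*x2 + b" "x1 \<noteq> x2"
  shows "chord_slope x1 y1 x2 y2 * (y1 + y2) = x1^2 + x1*x2 + x2^2 + a"
proof -
  have "(y2 - y1) * (y1 + y2) = (x2 - x1) * (x1^2 + x1*x2 + x2^2 + a)"
    using assms(1,2) by (simp add: algebra_simps power2_eq_square power3_eq_cube)
  then show ?thesis
    using assms(3) by (simp add: chord_slope_def field_simps)
qed

lemma chord_cubic_factor:
  fixes x1 y1 x2 y2 a b x :: "'a::field"
  assumes "y1^2 = x1^3 + a*x1 + b" "y2^2 = x2^3 + a*x2 + b" "x1 \<noteq> x2"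
  defines "l \<equiv> chord_slope x1 y1 x2 y2"
  shows "x^3 + a*x + b - (y1 + l*(x - x1))^2 = (x - x1) * (x - x2) * (x - chord_x x1 y1 x2 y2)"
proof -
  have "y2 = y1 + l * (x2 - x1)"
    using assms(3) by (simp add: l_def chord_slope_def)
  have "l * (y1 + y2) = x1^2 + x1*x2 + x2^2 + a"
    unfolding l_def using assms(1-3) by (rule chord_slope_mult_sum)
  show ?thesis unfolding chord_x_def l_def[symmetric]
    using assms(1) \<open>y2 = _\<close> \<open>l * _ = _\<close> by algebra
qed

lemma chord_slope_scale:
  fixes u :: "'a::field"
  assumes "u \<noteq> 0"
  shows "chord_slope (u^2*x1) (u^3*y1) (u^2*x2) (u^3*y2) = u * chord_slope x1 y1 x2 y2"
proof -
  have "(u^3*y2 - u^3*y1) / (u^2*x2 - u^2*x1) = (u^2 * (u*(y2 - y1))) / (u^2 * (x2 - x1))"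
    by (simp add: algebra_simps power2_eq_square power3_eq_cube)
  then show ?thesis
    using assms by (simp add: chord_slope_def)
qed

lemma chord_x_scale:
  fixes u :: "'a::field"
  assumes "u \<noteq> 0"
  shows "chord_x (u^2*x1) (u^3*y1) (u^2*x2) (u^3*y2) = u^2 * chord_x x1 y1 x2 y2"
  unfolding chord_x_def chord_slope_scale[OF assms]
  by (simp add: power_mult_distrib algebra_simps)

lemma chord_x_uminus: "chord_x x1 (-y1) x2 (-y2) = chord_x x1 y1 x2 y2"
  by (simp add: chord_x_def chord_slope_def power2_eq_square field_simps)

lemma of_rat_chord_x:
  "(of_rat (chord_x x1 y1 x2 y2) :: 'a::field_char_0)
    = chord_x (of_rat x1) (of_rat y1) (of_rat x2) (of_rat y2)"
  by (simp add: chord_x_def chord_slope_def of_rat_diff of_rat_divide of_rat_power)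

context
  fixes q s t a b :: real
  assumes q_gt_1: "1 < q" and s_pos: "0 < s" and t_pos: "0 < t"
    and s_sq: "s^2 = 1 + a + b" and t_sq: "t^2 = q^3 + a*q + b"
    and a_small: "\<bar>a\<bar> \<le> 1/100" and b_small: "\<bar>b\<bar> \<le> 1/125"
begin

lemma normalized_s_bounds: "98/100 \<le> s" "s \<le> 1009/1000"
proof -
  have "(98/100)^2 \<le> s^2" "s^2 \<le> (1009/1000)^2"
    using s_sq a_small b_small by (auto simp: power_divide abs_le_iff)
  then show "98/100 \<le> s" "s \<le> 1009/1000"
    using s_pos by (auto intro: power2_le_imp_le)
qed

lemma normalized_t_lower: "98/100 * q \<le> t"
proof -
  have aq: "\<bar>a*q\<bar> \<le> q/100"
    using a_small q_gt_1 by (simp add: abs_mult mult_right_mono)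
  have "q \<le> q^2" "q^2 \<le> q^3"
    using q_gt_1 by (simp_all add: power2_eq_square power3_eq_cube)
  then have "9604/10000 * q^2 \<le> t^2"
    using t_sq abs_le_D2[OF aq] abs_le_D2[OF b_small] q_gt_1 by linarith
  then have "(98/100 * q)^2 \<le> t^2"
    by (simp add: power_mult_distrib power_divide)
  then show ?thesis
    by (rule power2_le_imp_le) (use t_pos in simp)
qed

lemma normalized_slope_mult_sum: "chord_slope 1 s q t * (s + t) = q^2 + q + 1 + a"
  using chord_slope_mult_sum[of s 1 a b t q] s_sq t_sq q_gt_1 by (simp add: algebra_simps)

lemma normalized_slope_sq_le: "(chord_slope 1 s q t)^2 \<le> 3 + q"
proof -
  define N where "N = q^2 + q + 1 + a"
  have "98/100 * (98/100 * q) \<le> s * t"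
    using normalized_s_bounds normalized_t_lower q_gt_1 by (intro mult_mono) auto
  then have st: "(1 + a + b) + (q^3 + a*q + b) + 2 * (9604/10000 * q) \<le> (s + t)^2"
    unfolding power2_sum s_sq t_sq by simp
  have "N^2 \<le> (3 + q) * ((1 + a + b) + (q^3 + a*q + b) + 2 * (9604/10000 * q))"
  proof -
    have "\<bar>a*q^2\<bar> \<le> q^2/100" "\<bar>a*q\<bar> \<le> q/100" "\<bar>b*q\<bar> \<le> q/125"
      using a_small b_small q_gt_1 by (simp_all add: abs_mult mult_right_mono)
    moreover have "a*a \<le> 1/10000"
      using mult_mono[OF a_small a_small] by simp
    moreover have "4 * q^2 \<le> q^3 + 4 * q"
    proof -
      have "0 \<le> q * (q - 2)^2"
        using q_gt_1 by simp
      then show ?thesis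
        by (simp add: power2_eq_square power3_eq_cube algebra_simps)
    qed
    moreover have "(3 + q) * ((1 + a + b) + (q^3 + a*q + b) + 2 * (9604/10000 * q)) - N^2
        = q^3 - 10792/10000*q^2 + 47624/10000*q + 2 - a*q^2 + 2*(a*q) + a + 6*b + 2*(b*q) - a*a"
      unfolding N_def by algebra
    ultimately show ?thesis
      using a_small b_small q_gt_1 by (simp add: abs_le_iff)
  qed
  also have "\<dots> \<le> (3 + q) * (s + t)^2"
    using st q_gt_1 by (intro mult_left_mono) auto
  finally have "(chord_slope 1 s q t)^2 * (s + t)^2 \<le> (3 + q) * (s + t)^2"
    using normalized_slope_mult_sum by (simp add: N_def flip: power_mult_distrib)
  then show ?thesis
    using s_pos t_pos by simp
qed

lemma normalized_slope_ge: "141/100 \<le> chord_slope 1 s q t"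
proof -
  define l where "l = chord_slope 1 s q t"
  define N where "N = q^2 + q + 1 + a"
  have lN: "l * (s + t) = N"
    unfolding l_def N_def by (rule normalized_slope_mult_sum)
  have N_ge: "q^2 + q + 99/100 \<le> N"
    unfolding N_def using a_small by simp
  have "0 < q^2 + q + 99/100"
    using q_gt_1 by (simp add: add_pos_pos)
  then have "0 < l"
    using lN N_ge s_pos t_pos by (metis add_pos_pos order_less_le_trans zero_less_mult_pos2)
  have "(s + t)^2 \<le> 2 * (1026/1000 + q^3 + q/100)"
  proof -
    have "(s + t)^2 \<le> 2 * (s^2 + t^2)"
      using sum_squares_ge_zero[of "s - t" 0] by (simp add: power2_eq_square algebra_simps)
    moreover have "\<bar>a*q\<bar> \<le> q/100"
      using a_small q_gt_1 by (simp add: abs_mult mult_right_mono)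
    ultimately show ?thesis
      unfolding s_sq t_sq using a_small b_small by (simp add: abs_le_iff)
  qed
  moreover have "19881/5000 * (1026/1000 + q^3 + q/100) \<le> (q^2 + q + 99/100)^2"
  proof -
    define e where "e = q - 1"
    have "0 < e"
      using q_gt_1 by (simp add: e_def)
    moreover have "(q^2 + q + 99/100)^2 - 19881/5000 * (1026/1000 + q^3 + q/100)
        = 4222784/5000000 + 2985819/500000*e + 15257/5000*e^2 + 10119/5000*e^3 + e^4"
      unfolding e_def by (simp add: field_simps power2_eq_square power3_eq_cube power4_eq_xxxx)
    moreover have "0 \<le> e^2" "0 \<le> e^3" "0 \<le> e^4"
      using \<open>0 < e\<close> by simp_all
    ultimately show ?thesis
      by linarith
  qed
  moreover have "(q^2 + q + 99/100)^2 \<le> N^2"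
    using N_ge \<open>0 < q^2 + q + 99/100\<close> by (intro power_mono) auto
  ultimately have "(141/100)^2 * (s + t)^2 \<le> l^2 * (s + t)^2"
    using lN by (simp add: power_divide flip: power_mult_distrib)
  then have "(141/100)^2 \<le> l^2"
    using s_pos t_pos by simp
  then show ?thesis
    unfolding l_def[symmetric] by (rule power2_le_imp_le) (use \<open>0 < l\<close> in simp)
qed

lemma normalized_chord_x_bounds: "19/100 \<le> chord_x 1 s q t" "chord_x 1 s q t \<le> 2"
proof -
  define l where "l = chord_slope 1 s q t"
  define x :: real where "x = 19/100"
  have factor: "x^3 + a*x + b - (s + l*(x - 1))^2 = (x - 1) * (x - q) * (x - chord_x 1 s q t)"
    unfolding l_def using s_sq t_sq q_gt_1 by (intro chord_cubic_factor) simp_all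
  have "1331/10000 \<le> - (s + l*(x - 1))"
    using normalized_s_bounds(2) normalized_slope_ge unfolding l_def x_def by simp
  then have "(1331/10000)^2 \<le> (s + l*(x - 1))^2"
    by (metis power2_minus power_mono zero_le_divide_iff zero_le_numeral)
  moreover have "x^3 + a*x + b \<le> 16759/1000000"
    unfolding x_def using a_small b_small by (simp add: power_divide abs_le_iff)
  ultimately have "(x - 1) * (x - q) * (x - chord_x 1 s q t) < 0"
    unfolding factor[symmetric] by (simp add: power_divide)
  moreover have "0 < (x - 1) * (x - q)"
    unfolding x_def using q_gt_1 by (simp add: mult_neg_neg)
  ultimately have "x - chord_x 1 s q t < 0"
    by (metis mult_less_0_iff order.asym)
  then show "19/100 \<le> chord_x 1 s q t"
    unfolding x_def by simp
  show "chord_x 1 s q t \<le> 2"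
    using normalized_slope_sq_le by (simp add: chord_x_def)
qed

end

lemma chord_x_bounds_pos:
  fixes p q s t a b :: real
  assumes "0 < p" "p < q" "0 < s" "0 < t"
    and s_sq: "s^2 = p^3 + a*p + b" and t_sq: "t^2 = q^3 + a*q + b"
    and a_small: "100 * \<bar>a\<bar> \<le> p^2" and b_small: "125 * \<bar>b\<bar> \<le> p^3"
  shows "19/100 * p \<le> chord_x p s q t \<and> chord_x p s q t \<le> 2 * p"
proof -
  define r where "r = sqrt p"
  have "0 < r" "r^2 = p"
    using \<open>0 < p\<close> by (simp_all add: r_def)
  have r6: "(r^3)^2 = p^3"
    by (simp flip: \<open>r^2 = p\<close> add: power_mult [symmetric])
  have scale: "chord_x p s q t = p * chord_x 1 (s / r^3) (q / p) (t / r^3)"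
    using chord_x_scale[of r 1 "s / r^3" "q / p" "t / r^3"] \<open>0 < r\<close> \<open>0 < p\<close>
    by (simp add: \<open>r^2 = p\<close>)
  have "1 < q / p" "0 < s / r^3" "0 < t / r^3"
    using assms \<open>0 < r\<close> by simp_all
  moreover have "(s / r^3)^2 = 1 + a / p^2 + b / p^3"
    "(t / r^3)^2 = (q / p)^3 + a / p^2 * (q / p) + b / p^3"
    unfolding power_divide r6 s_sq t_sq using \<open>0 < p\<close>
    by (simp_all add: field_simps power2_eq_square power3_eq_cube)
  moreover have "\<bar>a / p^2\<bar> \<le> 1/100" "\<bar>b / p^3\<bar> \<le> 1/125"
    using a_small b_small \<open>0 < p\<close> by (simp_all add: field_simps)
  ultimately have "19/100 \<le> chord_x 1 (s / r^3) (q / p) (t / r^3)"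
    "chord_x 1 (s / r^3) (q / p) (t / r^3) \<le> 2"
    by (rule normalized_chord_x_bounds)+
  then show ?thesis
    unfolding scale using \<open>0 < p\<close> by simp
qed

lemma chord_x_bounds:
  fixes p q s t a b :: rat
  assumes "0 < p" "p < q" "0 < s * t"
    and "s^2 = p^3 + a*p + b" "t^2 = q^3 + a*q + b"
    and "100 * \<bar>a\<bar> \<le> p^2" "125 * \<bar>b\<bar> \<le> p^3"
  shows "19/100 * p \<le> chord_x p s q t \<and> chord_x p s q t \<le> 2 * p"
proof -
  have pos_case: "19/100 * p \<le> chord_x p s' q t' \<and> chord_x p s' q t' \<le> 2 * p"
    if "0 < s'" "0 < t'" "s'^2 = p^3 + a*p + b" "t'^2 = q^3 + a*q + b" for s' t'
  proof -
    let ?R = "of_rat :: rat \<Rightarrow> real"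
    have "19/100 * ?R p \<le> chord_x (?R p) (?R s') (?R q) (?R t') \<and>
        chord_x (?R p) (?R s') (?R q) (?R t') \<le> 2 * ?R p"
    proof (rule chord_x_bounds_pos)
      show "(?R s')^2 = (?R p)^3 + ?R a * ?R p + ?R b"
        "(?R t')^2 = (?R q)^3 + ?R a * ?R q + ?R b"
        using that(3,4) by (metis of_rat_add of_rat_mult of_rat_power)+
      show "100 * \<bar>?R a\<bar> \<le> (?R p)^2" "125 * \<bar>?R b\<bar> \<le> (?R p)^3"
        using assms(6,7)
        by (metis abs_of_rat of_rat_less_eq of_rat_mult of_rat_numeral_eq of_rat_power)+
    qed (use assms(1,2) that(1,2) in \<open>simp_all add: of_rat_less\<close>)
    moreover have "?R (19/100 * p) = 19/100 * ?R p" "?R (2 * p) = 2 * ?R p"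
      by (simp_all add: of_rat_mult of_rat_divide)
    ultimately show ?thesis
      by (metis of_rat_chord_x of_rat_less_eq)
  qed
  from \<open>0 < s * t\<close> consider "0 < s" "0 < t" | "s < 0" "t < 0"
    by (auto simp: zero_less_mult_iff)
  then show ?thesis
  proof cases
    case 1
    then show ?thesis using assms(4,5) by (rule pos_case)
  next
    case 2
    then show ?thesis
      using pos_case[of "-s" "-t"] assms(4,5) by (simp add: chord_x_uminus)
  qed
qed

lemma coeff_bound_of_root_bound:
  fixes A M D :: int and x :: rat
  assumes "0 < n" and root_le: "real c * root n \<bar>real_of_int A\<bar> \<le> real_of_int M"
    and "0 < D" and "of_int (M * D) \<le> x"
  shows "of_nat c ^ n * \<bar>of_int (D^n * A)\<bar> \<le> x^n"
proof -
  have "0 \<le> real c * root n \<bar>real_of_int A\<bar>"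
    by (simp add: real_root_ge_zero)
  then have "0 \<le> M"
    using root_le by linarith
  have "(real c * root n \<bar>real_of_int A\<bar>)^n \<le> (real_of_int M)^n"
    using root_le \<open>0 \<le> real c * _\<close> by (intro power_mono)
  then have "real c ^ n * \<bar>real_of_int A\<bar> \<le> (real_of_int M)^n"
    using \<open>0 < n\<close> by (simp add: power_mult_distrib)
  then have "real_of_int (int c ^ n * \<bar>A\<bar>) \<le> real_of_int (M^n)"
    by simp
  then have "int c ^ n * \<bar>A\<bar> \<le> M^n"
    by (simp only: of_int_le_iff)
  then have "int c ^ n * \<bar>D^n * A\<bar> \<le> (M * D)^n"
    using \<open>0 < D\<close> mult_left_mono[of _ _ "D^n"]
    by (simp add: abs_mult power_mult_distrib algebra_simps)
  then have "(of_int (int c ^ n * \<bar>D^n * A\<bar>) :: rat) \<le> of_int ((M * D)^n)"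
    by (simp only: of_int_le_iff)
  then have "of_nat c ^ n * \<bar>of_int (D^n * A)\<bar> \<le> (of_int (M * D) :: rat)^n"
    by simp
  also have "\<dots> \<le> x^n"
    using \<open>0 \<le> M\<close> \<open>0 < D\<close> \<open>of_int (M * D) \<le> x\<close> by (intro power_mono) simp_all
  finally show ?thesis .
qed

theorem lemma3p6:
  fixes A B M D :: int and x1 y1 x2 y2 :: rat
  assumes disc: "4 * A^3 + 27 * B^2 \<noteq> 0"
    and Mpos: "M > 0"
    and Mbound: "max (10 * sqrt \<bar>real_of_int A\<bar>) (5 * root 3 \<bar>real_of_int B\<bar>) \<le> real_of_int M"
    and Dpos: "D > 0" and Dsqf: "squarefree D"
    and P_on: "on_curve (of_int (D^2 * A)) (of_int (D^3 * B)) (Pt x1 y1)"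
    and Q_on: "on_curve (of_int (D^2 * A)) (of_int (D^3 * B)) (Pt x2 y2)"
    and xs: "of_int (M * D) \<le> x1" "x1 < x2"
    and ys: "y1 * y2 > 0"
  shows "case ec_add (of_int (D^2 * A)) (Pt x1 y1) (Pt x2 y2) of
           Inf \<Rightarrow> False
         | Pt x3 y3 \<Rightarrow> 19/100 * x1 \<le> x3 \<and> x3 \<le> 2 * x1"
proof -
  define a :: rat where "a = of_int (D^2 * A)"
  define b :: rat where "b = of_int (D^3 * B)"
  have curve: "y1^2 = x1^3 + a*x1 + b" "y2^2 = x2^3 + a*x2 + b"
    using P_on Q_on by (simp_all add: on_curve_def a_def b_def)
  have "real 10 * root 2 \<bar>real_of_int A\<bar> \<le> real_of_int M"
    using Mbound by (simp add: sqrt_def)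
  from coeff_bound_of_root_bound[OF _ this Dpos xs(1)]
  have a_small: "100 * \<bar>a\<bar> \<le> x1^2"
    by (simp add: a_def)
  have "real 5 * root 3 \<bar>real_of_int B\<bar> \<le> real_of_int M"
    using Mbound by simp
  from coeff_bound_of_root_bound[OF _ this Dpos xs(1)]
  have b_small: "125 * \<bar>b\<bar> \<le> x1^3"
    by (simp add: b_def)
  have "0 < x1"
    using Mpos Dpos xs(1) by (metis of_int_pos mult_pos_pos order_less_le_trans)
  from chord_x_bounds[OF this xs(2) ys curve a_small b_small]
  have "19/100 * x1 \<le> chord_x x1 y1 x2 y2 \<and> chord_x x1 y1 x2 y2 \<le> 2 * x1" .
  then show ?thesis
    unfolding a_def [symmetric] ec_add_chord [OF less_imp_neq [OF xs(2)]] by simp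
qed

end
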